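(* Let $k\geq 2$ be an even integer, let $\Psi_k(x) = x^k - 2x^{k-1} - x^{k-2} - \cdots - x - 1$, and let $\gamma_1, \ldots, \gamma_k$ be the roots of $\Psi_k$ labeled so that $\gamma_1 > |\gamma_2| \geq |\gamma_3| \geq \cdots \geq |\gamma_k|$, where $\gamma_1$ is the unique root of $\Psi_k$ outside the unit circle. Then $$\frac{|\gamma_{k-1}|}{|\gamma_k|} > 1 + \frac{1}{k^{k^2}}.$$
   Context: It is known that $\Psi_k$ is irreducible over $\mathbb{Q}$ and has exactly one root outside the unit circle, which is real and greater than $1$; all other roots lie strictly inside the unit circle. For even $k$, $\gamma_k$ denotes the real root of $\Psi_k$ of smallest modulus in this labeling. *)

theory Defs
  imports "HOL-Computational_Algebra.Computational_Algebra"
begin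

definition Psi :: "nat \<Rightarrow> complex poly" where
  "Psi k = monom 1 k - smult 2 (monom 1 (k - 1)) - (\<Sum>i<k - 1. monom 1 i)"

end

theory Submission
  imports Defs
begin

text \<open>
  For even \<open>k\<close>, \<open>(z - 1) \<Psi>\<^sub>k(z) = 1 - \<Phi>\<^sub>k(-z)\<close> with
  \<open>\<Phi>\<^sub>k(w) = w^(k+1) + 3 w^k + w^(k-1)\<close>. Since \<open>\<Phi>\<^sub>k\<close> has nonnegative coefficients,
  every root \<open>z\<close> satisfies \<open>\<Phi>\<^sub>k(|z|) \<ge> 1 = \<Phi>\<^sub>k(\<rho>)\<close>, where \<open>\<rho> > 0\<close> solves
  \<open>\<Phi>\<^sub>k(\<rho>) = 1\<close>; so \<open>|z| \<ge> \<rho>\<close>, and \<open>-\<rho>\<close>, a simple root, is \<open>\<gamma>\<^sub>k\<close>.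
  For every other root, \<open>w = -z\<close> lies off the positive axis, and \<open>Im \<Phi>\<^sub>k(w) = 0\<close>
  forces \<open>|arg w| > \<pi>/(k+1)\<close>. This makes the triangle inequality lossy by a definite
  amount, \<open>\<Phi>\<^sub>k(|w|)^2 \<ge> 1 + 3 |w|^(2k) / (k+1)^2\<close>, while \<open>\<Phi>\<^sub>k(|w|) \<le> (1 + \<epsilon>)^(k+1)\<close>
  whenever \<open>|w| \<le> (1 + \<epsilon>) \<rho>\<close>. For \<open>\<epsilon> = k^(-k^2)\<close> the two bounds are incompatible
  once \<open>k \<ge> 4\<close>; for \<open>k = 2\<close> the roots are \<open>1 \<plusminus> \<surd>2\<close> and the claim is checked directly.
\<close>

lemma sin_ge_half_x:
  fixes x :: real
  assumes "0 \<le> x" "x \<le> pi / 3"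
  shows "x / 2 \<le> sin x"
proof -
  have "\<And>u. 0 \<le> u \<Longrightarrow> u \<le> x \<Longrightarrow> ((\<lambda>x. sin x - x / 2) has_real_derivative cos u - 1 / 2) (at u)"
    by (auto intro!: derivative_eq_intros)
  moreover have "0 \<le> cos u - 1 / 2" if "0 \<le> u" "u \<le> x" for u
  proof -
    have "cos (pi / 3) \<le> cos u"
      using that assms by (intro cos_monotone_0_pi_le) auto
    then show ?thesis by (simp add: cos_60)
  qed
  ultimately have "sin 0 - 0 / 2 \<le> sin x - x / 2"
    by (intro DERIV_nonneg_imp_nondecreasing[OF assms(1)]) blast
  then show ?thesis by simp
qed

lemma cos_pi_div_le:
  fixes x :: real
  assumes "2 \<le> x"
  shows "cos (pi / x) \<le> 1 - 1 / (2 * x^2)"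
proof -
  have "1 / (2 * x) \<le> pi / (4 * x)"
    using assms pi_ge_two by (simp add: field_simps)
  also have "pi / (4 * x) \<le> sin (pi / (2 * x))"
    using sin_ge_half_x[of "pi / (2 * x)"] assms by (simp add: field_simps)
  finally have "(1 / (2 * x))^2 \<le> sin (pi / (2 * x))^2"
    using assms by (intro power_mono) auto
  moreover have "cos (pi / x) = 1 - 2 * sin (pi / (2 * x))^2"
    using cos_double_sin[of "pi / (2 * x)"] assms by simp
  ultimately show ?thesis by (simp add: power_divide field_simps)
qed

lemma power_pred_sq_mult:
  fixes x :: "'a::comm_monoid_mult"
  assumes "1 \<le> k"
  shows "(x^(k-1))^2 * x^2 = x^(2 * k)"
proof -
  have "x^(k-1) * x = x^k"
    using assms by (intro power_minus_mult) simp
  then show ?thesis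
    by (metis power_mult_distrib power_mult mult.commute)
qed

lemma one_add_power_le:
  fixes e :: real
  assumes "0 \<le> e" "e \<le> 1"
  shows "(1 + e)^n \<le> 1 + (2^n - 1) * e"
proof (induction n)
  case 0
  then show ?case by simp
next
  case (Suc n)
  have "(1 + e)^Suc n \<le> (1 + (2^n - 1) * e) * (1 + e)"
    using Suc assms by (simp add: mult_right_mono mult.commute)
  also have "\<dots> = 1 + 2^n * e + (2^n - 1) * e * e"
    by (simp add: algebra_simps)
  also have "\<dots> \<le> 1 + 2^n * e + (2^n - 1) * e"
    using assms by (intro add_left_mono mult_left_le) auto
  also have "\<dots> = 1 + (2^Suc n - 1) * e"
    by (simp add: algebra_simps)
  finally show ?case .
qed

lemma power_square_exponent_gt:
  fixes k :: nat
  assumes "4 \<le> k"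
  shows "625 * (k+1)^2 * 2^(2*k+2) < 3 * k^(k^2)"
proof -
  have "(k+1)^2 < (2^(k+1))^2"
    using less_exp[of "k+1"] by (rule power_strict_mono) simp_all
  also have "(2^(k+1))^2 = (2::nat)^(2*k+2)"
    by (simp flip: power_mult)
  finally have "625 * (k+1)^2 * 2^(2*k+2) < 625 * 2^(2*k+2) * (2::nat)^(2*k+2)"
    by simp
  also have "\<dots> \<le> 3 * 2^(4*k-4) * 2^(2*k+2) * (2::nat)^(2*k+2)"
    using power_increasing[of 12 "4*k-4" "2::nat"] assms by fastforce
  also have "\<dots> = 3 * 2^(2*(4*k))"
    using assms by (simp only: mult.assoc flip: power_add) (intro arg_cong[where f = "\<lambda>n. 3 * 2^n"]; simp)
  also have "\<dots> = 3 * 4^(4*k)"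
    by (simp add: power_mult)
  also have "\<dots> \<le> 3 * 4^(k^2)"
    using assms by (simp add: power_increasing power2_eq_square)
  also have "\<dots> \<le> 3 * k^(k^2)"
    using assms by (simp add: power_mono)
  finally show ?thesis .
qed

section \<open>The polynomial \<open>\<Phi>\<^sub>k\<close>\<close>

definition Phi :: "nat \<Rightarrow> 'a::comm_ring_1 \<Rightarrow> 'a" where
  "Phi k w = w^(k+1) + 3 * w^k + w^(k-1)"

lemma Phi_of_real: "Phi k (of_real s) = of_real (Phi k s)"
  by (simp add: Phi_def)

lemma Phi_factor: "1 \<le> k \<Longrightarrow> Phi k w = w^(k-1) * (w^2 + 3 * w + 1)"
  by (cases k) (auto simp: Phi_def algebra_simps power2_eq_square)

lemma norm_Phi_le:
  fixes w :: "'a::real_normed_field"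
  shows "norm (Phi k w) \<le> Phi k (norm w)"
proof -
  have "norm (Phi k w) \<le> norm (w^(k+1)) + norm (3 * w^k) + norm (w^(k-1))"
    unfolding Phi_def by (intro norm_triangle_le add_mono norm_triangle_ineq order_refl)
  also have "\<dots> \<le> Phi k (norm w)"
    unfolding Phi_def by (intro add_mono norm_power_ineq) (simp_all add: norm_mult norm_power_ineq)
  finally show ?thesis .
qed

lemma strict_mono_on_Phi: "strict_mono_on {0..} (Phi k :: real \<Rightarrow> real)"
proof (rule strict_mono_onI)
  fix a b :: real assume "a \<in> {0..}" "b \<in> {0..}" "a < b"
  then have "a^(k+1) < b^(k+1)"
    by (intro power_strict_mono) auto
  moreover have "a^k \<le> b^k" "a^(k-1) \<le> b^(k-1)"
    using \<open>a \<in> {0..}\<close> \<open>a < b\<close> by (auto intro!: power_mono)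
  ultimately show "Phi k a < Phi k b" by (simp add: Phi_def)
qed

lemma Phi_mult_le:
  fixes s l :: real
  assumes "0 \<le> s" "1 \<le> l"
  shows "Phi k (l * s) \<le> l^(k+1) * Phi k s"
proof -
  have "l^k \<le> l^(k+1)" "l^(k-1) \<le> l^(k+1)"
    using assms by (intro power_increasing; simp)+
  then have "l^k * s^k \<le> l^(k+1) * s^k" "l^(k-1) * s^(k-1) \<le> l^(k+1) * s^(k-1)"
    using assms by (simp_all add: mult_right_mono)
  then show ?thesis by (simp add: Phi_def power_mult_distrib algebra_simps)
qed

lemma Phi_eq_1_solution:
  assumes "2 \<le> k"
  obtains \<rho> :: real where "0 < \<rho>" "Phi k \<rho> = 1"
proof -
  have "Phi k 0 = (0::real)" "Phi k 1 = (5::real)"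
    using assms by (simp_all add: Phi_def power_0_left)
  moreover have "\<forall>x. 0 \<le> x \<and> x \<le> 1 \<longrightarrow> isCont (Phi k :: real \<Rightarrow> real) x"
    unfolding Phi_def by (auto intro!: continuous_intros)
  ultimately obtain \<rho> :: real where "0 \<le> \<rho>" "\<rho> \<le> 1" "Phi k \<rho> = 1"
    using IVT[of "Phi k :: real \<Rightarrow> real" 0 1 1] by auto
  moreover have "\<rho> \<noteq> 0" using \<open>Phi k 0 = 0\<close> \<open>Phi k \<rho> = 1\<close> by auto
  ultimately show thesis
    by (intro that) auto
qed

lemma Phi_eq_1_norm_ge:
  fixes w :: "'a::real_normed_field"
  assumes "0 \<le> \<rho>" "Phi k \<rho> = 1" "Phi k w = 1"
  shows "\<rho> \<le> norm w"
proof -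
  have "Phi k \<rho> \<le> Phi k (norm w)"
    using norm_Phi_le[of k w] assms by simp
  then show ?thesis
    using strict_mono_on_less_eq[OF strict_mono_on_Phi[of k], of \<rho> "norm w"] assms by simp
qed

lemma Phi_eq_1_solution_pow_ge:
  fixes \<rho> :: real
  assumes "2 \<le> k" "0 \<le> \<rho>" "Phi k \<rho> = 1"
  shows "1 / 625 \<le> \<rho>^(2 * k)"
proof -
  have "Phi k \<rho> < Phi k 1"
    using assms by (simp add: Phi_def)
  then have "\<rho> < 1"
    using strict_mono_on_less[OF strict_mono_on_Phi[of k], of \<rho> 1] assms by simp
  then have "\<rho>^2 + 3 * \<rho> + 1 \<le> 5"
    using assms power_le_one[of \<rho> 2] by simp
  then have "\<rho>^(k-1) * (\<rho>^2 + 3 * \<rho> + 1) \<le> \<rho>^(k-1) * 5"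
    using assms by (intro mult_left_mono) simp_all
  then have "Phi k \<rho> \<le> \<rho>^(k-1) * 5"
    using assms by (simp add: Phi_factor)
  then have "1 / 5 \<le> \<rho>^(k-1)"
    using assms by simp
  moreover have "\<rho>^(k-1) \<le> \<rho>"
    using power_decreasing[of 1 "k-1" \<rho>] \<open>\<rho> < 1\<close> assms by simp
  ultimately have "(1 / 5)^2 * (1 / 5)^2 \<le> (\<rho>^(k-1))^2 * \<rho>^2"
    by (intro mult_mono power_mono) auto
  also have "\<dots> = \<rho>^(2 * k)"
    using assms(1) by (intro power_pred_sq_mult) simp
  finally show ?thesis by (simp add: power_divide)
qed

lemma Phi_eq_1_Arg:
  fixes w :: complex
  assumes "2 \<le> k" "Phi k w = 1"
  shows "Arg w = 0 \<or> pi / (real k + 1) < \<bar>Arg w\<bar>"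
proof (rule ccontr)
  define s where "s = cmod w"
  define S where "S t = s^(k+1) * sin (real (k+1) * t) + 3 * s^k * sin (real k * t)
    + s^(k-1) * sin (real (k-1) * t)" for t :: real
  assume "\<not> ?thesis"
  then have e: "0 < \<bar>Arg w\<bar>" "(real k + 1) * \<bar>Arg w\<bar> \<le> pi"
    by (auto simp: field_simps)
  have "w \<noteq> 0"
    using assms by (auto simp: Phi_def power_0_left)
  then have "0 < s"
    by (simp add: s_def)
  have "S (Arg w) = Im (Phi k (rcis s (Arg w)))"
    unfolding Phi_def DeMoivre2 by (simp add: S_def)
  then have "S (Arg w) = Im (Phi k w)"
    by (simp add: s_def rcis_cmod_Arg)
  then have "S \<bar>Arg w\<bar> = 0"
    using assms(2) by (simp add: S_def abs_if)
  moreover have "0 < S \<bar>Arg w\<bar>"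
  proof -
    have "0 \<le> sin ((k+1) * \<bar>Arg w\<bar>)" "0 \<le> sin ((k-1) * \<bar>Arg w\<bar>)"
      using e assms(1) by (intro sin_ge_zero; simp add: of_nat_diff algebra_simps)+
    moreover have "0 < sin (k * \<bar>Arg w\<bar>)"
      using e assms(1) by (intro sin_gt_zero) (auto simp: algebra_simps)
    ultimately show ?thesis
      using \<open>0 < s\<close> unfolding S_def by (intro add_nonneg_pos add_pos_nonneg) auto
  qed
  ultimately show False by simp
qed

lemma Phi_eq_1_Re_le:
  fixes w :: complex
  assumes "2 \<le> k" "Phi k w = 1" "w \<noteq> of_real (cmod w)"
  shows "Re w \<le> cmod w * (1 - 1 / (2 * (real k + 1)^2))"
proof -
  have "Arg w \<noteq> 0"
    using assms(3) rcis_cmod_Arg[of w] by (auto simp: rcis_def)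
  then have "pi / (real k + 1) < \<bar>Arg w\<bar>"
    using Phi_eq_1_Arg[OF assms(1,2)] by simp
  then have "cos (Arg w) \<le> cos (pi / (real k + 1))"
    using Arg_bounded[of w] by (subst cos_abs_real[symmetric], intro cos_monotone_0_pi_le) auto
  also have "\<dots> \<le> 1 - 1 / (2 * (real k + 1)^2)"
    by (rule cos_pi_div_le) (use assms(1) in simp)
  finally show ?thesis
    using rcis_cmod_Arg[of w] mult_left_mono[of _ _ "cmod w"]
    by (metis Re_rcis norm_ge_zero)
qed

lemma norm_quadratic_gap:
  fixes w :: complex
  defines "s \<equiv> cmod w"
  shows "(s^2 + 3 * s + 1)^2 - cmod (w^2 + 3 * w + 1)^2
           = 6 * ((s^2 + 1) * (s - Re w)) + 4 * (s^2 - Re w^2)"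
proof -
  have "s^2 = Re w^2 + Im w^2"
    by (simp add: s_def cmod_power2)
  then show ?thesis
    unfolding cmod_power2 by (simp add: power2_eq_square algebra_simps)
qed

lemma Phi_eq_1_norm_gap:
  fixes w :: complex
  assumes "2 \<le> k" "Phi k w = 1" "w \<noteq> of_real (cmod w)"
  shows "1 + 3 * cmod w^(2 * k) / (real k + 1)^2 \<le> Phi k (cmod w)^2"
proof -
  define s where "s = cmod w"
  define G where "G = s^2 + 3 * s + 1"
  have "0 \<le> s"
    by (simp add: s_def)
  have norm_eq: "s^(k-1) * cmod (w^2 + 3 * w + 1) = 1"
    using arg_cong[OF assms(2), of cmod] assms(1) by (simp add: Phi_factor norm_mult norm_power s_def)
  have "s / (2 * (real k + 1)^2) \<le> s - Re w"
    using Phi_eq_1_Re_le[OF assms] by (simp add: s_def algebra_simps)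
  moreover have "s \<le> s^2 + 1"
    using zero_le_power2[of "s - 1"] \<open>0 \<le> s\<close> unfolding power2_diff by simp
  ultimately have "s * (s / (2 * (real k + 1)^2)) \<le> (s^2 + 1) * (s - Re w)"
    by (intro mult_mono) (auto simp: s_def)
  moreover have "Re w^2 \<le> s^2"
    by (simp add: s_def cmod_power2)
  ultimately have "6 * (s * (s / (2 * (real k + 1)^2)))
                    \<le> 6 * ((s^2 + 1) * (s - Re w)) + 4 * (s^2 - Re w^2)"
    by argo
  then have "3 * s^2 / (real k + 1)^2 \<le> G^2 - cmod (w^2 + 3 * w + 1)^2"
    unfolding G_def s_def norm_quadratic_gap by (simp add: power2_eq_square)
  then have "(s^(k-1))^2 * (3 * s^2 / (real k + 1)^2)
               \<le> (s^(k-1))^2 * (G^2 - cmod (w^2 + 3 * w + 1)^2)"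
    by (intro mult_left_mono) auto
  also have "\<dots> = Phi k s^2 - 1"
    using norm_eq assms(1) by (simp add: G_def Phi_factor power_mult_distrib[symmetric] algebra_simps)
  also have "(s^(k-1))^2 * (3 * s^2 / (real k + 1)^2) = 3 * s^(2 * k) / (real k + 1)^2"
    using assms(1) power_pred_sq_mult[of k s] by simp
  finally show ?thesis
    by (simp add: s_def)
qed

lemma Phi_eq_1_norm_gt:
  fixes w :: complex
  assumes "4 \<le> k" "0 < \<rho>" "Phi k \<rho> = 1" "Phi k w = 1" "w \<noteq> of_real (cmod w)"
  shows "(1 + 1 / real k ^ (k^2)) * \<rho> < cmod w"
proof (rule ccontr)
  define E where "E = 1 / real k ^ (k^2)"
  define b where "b = cmod w"
  have E: "0 \<le> E" "E \<le> 1"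
    using assms(1) by (auto simp: E_def)
  have "\<rho> \<le> b"
    using Phi_eq_1_norm_ge[of \<rho> k w] assms by (simp add: b_def)
  assume "\<not> ?thesis"
  then have "b \<le> (1 + E) * \<rho>"
    by (simp add: E_def b_def)
  then have "Phi k b \<le> Phi k ((1 + E) * \<rho>)"
    using strict_mono_on_leD[OF strict_mono_on_Phi] assms(2) \<open>\<rho> \<le> b\<close> by simp
  also have "\<dots> \<le> (1 + E)^(k+1)"
    using Phi_mult_le[of \<rho> "1 + E" k] assms E by simp
  finally have "Phi k b^2 \<le> ((1 + E)^(k+1))^2"
    using strict_mono_on_leD[OF strict_mono_on_Phi, of 0 b k] \<open>\<rho> \<le> b\<close> assms(1,2)
    by (intro power_mono) (auto simp: Phi_def power_0_left)
  also have "\<dots> = (1 + E)^(2*k+2)"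
    unfolding power_mult[symmetric] by (rule arg_cong[where f = "power (1 + E)"]) simp
  also have "\<dots> \<le> 1 + (2^(2*k+2) - 1) * E"
    using one_add_power_le[OF E] .
  finally have upper: "Phi k b^2 \<le> 1 + 2^(2*k+2) * E"
    using E by (simp add: algebra_simps)
  have "1 / 625 \<le> \<rho>^(2*k)"
    using Phi_eq_1_solution_pow_ge assms by simp
  also have "\<rho>^(2*k) \<le> b^(2*k)"
    using \<open>\<rho> \<le> b\<close> assms(2) by (simp add: power_mono)
  finally have "3 * (1 / 625) / (real k + 1)^2 \<le> 3 * b^(2*k) / (real k + 1)^2"
    by (intro divide_right_mono mult_left_mono) auto
  also have "\<dots> \<le> Phi k b^2 - 1"
    using Phi_eq_1_norm_gap[of k w] assms by (simp add: b_def)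
  finally have "3 * (1 / 625) / (real k + 1)^2 \<le> 2^(2*k+2) / real k ^ (k^2)"
    using upper by (simp add: E_def)
  then have "real (3 * k^(k^2)) \<le> real (625 * (k+1)^2 * 2^(2*k+2))"
    using assms(1) by (simp add: field_simps)
  then show False
    using power_square_exponent_gt[OF assms(1)] by linarith
qed

section \<open>Roots of \<open>\<Psi>\<^sub>k\<close>\<close>

lemma poly_Psi: "poly (Psi k) z = z^k - 2 * z^(k-1) - (\<Sum>i<k-1. z^i)"
  by (simp add: Psi_def poly_monom poly_sum)

lemma Psi_nonzero:
  assumes "2 \<le> k"
  shows "Psi k \<noteq> 0"
proof -
  have "poly (Psi k) 0 = -1"
    using assms by (simp add: poly_Psi power_0_left sum.delta')
  then show ?thesis
    by auto
qed

lemma poly_Psi_mult_linear: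
  assumes "2 \<le> k"
  shows "(z - 1) * poly (Psi k) z = z^(k+1) - 3 * z^k + z^(k-1) + 1"
proof -
  have geometric: "(\<Sum>i<k-1. z^i) * (z - 1) = z^(k-1) - 1"
    using power_diff_1_eq[of z "k-1"] by (simp add: mult.commute)
  have pred: "z^(k-1) * z = z^k"
    using assms by (intro power_minus_mult) simp
  have "(z - 1) * poly (Psi k) z
          = z^k * z - z^k - 2 * (z^(k-1) * z) + 2 * z^(k-1) - (\<Sum>i<k-1. z^i) * (z - 1)"
    unfolding poly_Psi by (simp add: algebra_simps)
  also have "\<dots> = z^(k+1) - 3 * z^k + z^(k-1) + 1"
    unfolding geometric pred by simp
  finally show ?thesis .
qed

lemma Psi_mult_linear:
  assumes "2 \<le> k"
  shows "[:-1, 1:] * Psi k = monom 1 (k+1) - smult 3 (monom 1 k) + monom 1 (k-1) + 1"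
proof -
  have "poly ([:-1, 1:] * Psi k) = poly (monom 1 (k+1) - smult 3 (monom 1 k) + monom 1 (k-1) + 1)"
    using poly_Psi_mult_linear[OF assms] by (auto simp: poly_monom algebra_simps)
  then show ?thesis
    by (simp add: poly_eq_poly_eq_iff)
qed

lemma poly_Psi_eq_Phi:
  assumes "even k" "2 \<le> k"
  shows "(z - 1) * poly (Psi k) z = 1 - Phi k (-z)"
proof -
  have "odd (k+1)" "odd (k-1)"
    using assms by auto
  then show ?thesis
    using poly_Psi_mult_linear[OF assms(2)] assms(1) by (simp add: Phi_def)
qed

lemma Psi_root_imp_Phi_eq_1:
  "even k \<Longrightarrow> 2 \<le> k \<Longrightarrow> poly (Psi k) z = 0 \<Longrightarrow> Phi k (-z) = 1"
  using poly_Psi_eq_Phi[of k z] by simp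

lemma pderiv_Psi_at_root:
  assumes "2 \<le> k" "poly (Psi k) z = 0"
  shows "(z - 1) * poly (pderiv (Psi k)) z
           = of_nat (k+1) * z^k - 3 * of_nat k * z^(k-1) + of_nat (k-1) * z^(k-2)"
proof -
  have "Psi k + [:-1, 1:] * pderiv (Psi k) = pderiv ([:-1, 1:] * Psi k)"
    unfolding pderiv_mult by (simp add: pderiv_pCons)
  also have "\<dots> = monom (of_nat (k+1)) k - smult 3 (monom (of_nat k) (k-1))
                    + monom (of_nat (k-1)) (k-2)"
    unfolding Psi_mult_linear[OF assms(1)]
    by (simp add: pderiv_add pderiv_diff pderiv_smult pderiv_monom numeral_2_eq_2)
  finally have "poly (Psi k + [:-1, 1:] * pderiv (Psi k)) z
                 = poly (monom (of_nat (k+1)) k - smult 3 (monom (of_nat k) (k-1))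
                     + monom (of_nat (k-1)) (k-2)) z"
    by simp
  then show ?thesis
    using assms(2) by (simp add: poly_monom algebra_simps)
qed

lemma order_Psi_neg_solution:
  assumes "even k" "2 \<le> k" "0 < \<rho>" "Phi k \<rho> = 1"
  shows "order (- of_real \<rho>) (Psi k) = 1"
proof -
  let ?z = "- complex_of_real \<rho>"
  have "(?z - 1) * poly (Psi k) ?z = 0"
    using poly_Psi_eq_Phi[OF assms(1,2)] assms(4) by (simp add: Phi_of_real)
  moreover have "?z - 1 \<noteq> 0"
    using assms(3) by (simp add: complex_eq_iff)
  ultimately have root: "poly (Psi k) ?z = 0"
    by simp
  define R where "R = (k+1) * \<rho>^k + 3 * k * \<rho>^(k-1) + (k-1) * \<rho>^(k-2)"
  have "odd (k-1)" "even (k-2)"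
    using assms(1,2) by auto
  then have "(?z - 1) * poly (pderiv (Psi k)) ?z = of_real R"
    using pderiv_Psi_at_root[OF assms(2) root] assms(1) by (simp add: R_def)
  moreover have "0 < R"
    using assms(3) unfolding R_def by (intro add_pos_nonneg) auto
  ultimately have "poly (pderiv (Psi k)) ?z \<noteq> 0"
    by auto
  then have "order ?z (pderiv (Psi k)) = 0"
    by (simp add: order_root)
  then show ?thesis
    using order_pderiv[OF Psi_nonzero[OF assms(2)] root] by simp
qed

lemma Psi_root_norm_ge:
  assumes "even k" "2 \<le> k" "0 < \<rho>" "Phi k \<rho> = 1" "poly (Psi k) z = 0"
  shows "\<rho> \<le> cmod z"
  using Phi_eq_1_norm_ge[of \<rho> k "-z"] Psi_root_imp_Phi_eq_1[of k z] assms by simp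

lemma Psi_root_norm_le_imp_eq:
  assumes "even k" "2 \<le> k" "0 < \<rho>" "Phi k \<rho> = 1" "poly (Psi k) z = 0" "cmod z \<le> \<rho>"
  shows "z = - of_real \<rho>"
proof -
  have norm: "cmod (-z) = \<rho>"
    using Psi_root_norm_ge[OF assms(1-5)] assms(6) by simp
  have "-z = of_real (cmod (-z))"
  proof (rule ccontr)
    assume "-z \<noteq> of_real (cmod (-z))"
    then have "1 + 3 * \<rho>^(2 * k) / (real k + 1)^2 \<le> Phi k \<rho>^2"
      using Phi_eq_1_norm_gap[of k "-z"] Psi_root_imp_Phi_eq_1[OF assms(1,2,5)] assms(2) norm
      by simp
    moreover have "0 < 3 * \<rho>^(2 * k) / (real k + 1)^2"
      using assms(3) by simp
    ultimately show False
      using assms(4) by simp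
  qed
  then show ?thesis
    using norm by (simp add: minus_equation_iff[of z])
qed

lemma Psi_root_norm_gt:
  assumes "even k" "4 \<le> k" "0 < \<rho>" "Phi k \<rho> = 1" "poly (Psi k) z = 0" "z \<noteq> - of_real \<rho>"
  shows "(1 + 1 / real k ^ (k^2)) * \<rho> < cmod z"
proof -
  have Phi_z: "Phi k (-z) = 1"
    using Psi_root_imp_Phi_eq_1[of k z] assms by simp
  have "-z \<noteq> of_real (cmod (-z))"
  proof
    assume real: "-z = of_real (cmod (-z))"
    then have "Phi k (cmod (-z)) = Phi k \<rho>"
      using Phi_z Phi_of_real[of k "cmod (-z)"] assms(4) by (metis of_real_eq_1_iff)
    then have "cmod (-z) = \<rho>"
      using strict_mono_on_eqD[OF strict_mono_on_Phi] assms(3) by force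
    then show False
      using real assms(6) by (simp add: minus_equation_iff[of z])
  qed
  then show ?thesis
    using Phi_eq_1_norm_gt[of k \<rho> "-z"] Phi_z assms by simp
qed

lemma Psi_2_pos_real_root_gt:
  assumes "poly (Psi 2) z = 0" "Im z = 0" "0 < Re z" "0 < \<rho>" "Phi 2 \<rho> = 1"
  shows "4 * \<rho> < cmod z"
proof -
  have "z = of_real (Re z)"
    using assms(2) by (simp add: complex_eq_iff)
  then have "Re z * (Re z - 2) = 1"
    using assms(1) by (simp add: poly_Psi complex_eq_iff power2_eq_square algebra_simps)
  then have "2 < Re z"
    using assms(3) zero_less_mult_iff[of "Re z" "Re z - 2"] by simp
  moreover have "\<rho> < 1 / 2"
    using strict_mono_on_less[OF strict_mono_on_Phi[of 2], of \<rho> "1/2"] assms(4,5)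
    by (simp add: Phi_def power_divide)
  ultimately show ?thesis
    using abs_Re_le_cmod[of z] by linarith
qed

lemma poly_eq_0_iff_label:
  assumes "mset (map \<gamma> [1..<k+1]) = proots p" "p \<noteq> 0"
  shows "poly p z = 0 \<longleftrightarrow> (\<exists>i\<in>{1..k}. \<gamma> i = z)"
proof -
  have "set_mset (mset (map \<gamma> [1..<k+1])) = \<gamma> ` {1..k}"
    by (simp only: set_mset_mset set_map set_upt) (rule arg_cong[where f = "image \<gamma>"], auto)
  then have "z \<in> {z. poly p z = 0} \<longleftrightarrow> z \<in> \<gamma> ` {1..k}"
    unfolding assms(1) using assms(2) by simp
  then show ?thesis
    by auto
qed

lemma order_repeated_label_ge_2:
  assumes "mset (map \<gamma> [1..<k+1]) = proots p" "2 \<le> k" "\<gamma> (k-1) = \<gamma> k"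
  shows "2 \<le> order (\<gamma> k) p"
proof -
  obtain j where j: "k = Suc (Suc j)"
    using assms(2) by (metis add_2_eq_Suc le_Suc_ex)
  then have "2 \<le> count (mset (map \<gamma> [1..<k+1])) (\<gamma> k)"
    using assms(3) by simp
  moreover have "p \<noteq> 0"
    using assms(1,2) by auto
  ultimately show ?thesis
    using assms(1) by simp
qed

theorem lemma3p2:
  fixes k :: nat and \<gamma> :: "nat \<Rightarrow> complex"
  assumes "k \<ge> 2" and "even k"
    and roots: "mset (map \<gamma> [1..<k+1]) = proots (Psi k)"
    and first: "Im (\<gamma> 1) = 0" "Re (\<gamma> 1) > cmod (\<gamma> 2)"
    and sorted: "\<And>i j. 2 \<le> i \<Longrightarrow> i \<le> j \<Longrightarrow> j \<le> k \<Longrightarrow> cmod (\<gamma> j) \<le> cmod (\<gamma> i)"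
  shows "cmod (\<gamma> (k - 1)) / cmod (\<gamma> k) > 1 + 1 / real k ^ (k ^ 2)"
proof -
  note k = \<open>even k\<close> \<open>k \<ge> 2\<close>
  note root_iff = poly_eq_0_iff_label[OF roots Psi_nonzero[OF k(2)]]
  have root: "poly (Psi k) (\<gamma> i) = 0" if "1 \<le> i" "i \<le> k" for i
    using that by (auto simp: root_iff)
  obtain \<rho> :: real where \<rho>: "0 < \<rho>" "Phi k \<rho> = 1"
    using Phi_eq_1_solution[OF k(2)] by blast
  have simple: "order (- of_real \<rho>) (Psi k) = 1"
    using order_Psi_neg_solution[OF k \<rho>] .
  then have "poly (Psi k) (- of_real \<rho>) = 0"
    by (simp add: order_root)
  then obtain i where i: "i \<in> {1..k}" "\<gamma> i = - of_real \<rho>"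
    using root_iff by blast
  have Re_\<gamma>1: "0 < Re (\<gamma> 1)"
    using first(2) norm_ge_zero[of "\<gamma> 2"] by linarith
  with i \<rho>(1) sorted[of i k] have "cmod (\<gamma> k) \<le> \<rho>"
    by (cases "i = 1") auto
  then have \<gamma>k: "\<gamma> k = - of_real \<rho>"
    using Psi_root_norm_le_imp_eq[OF k \<rho> root] k(2) by simp
  show ?thesis
  proof (cases "k = 2")
    case True
    then have "4 * \<rho> < cmod (\<gamma> (k - 1))"
      using Psi_2_pos_real_root_gt[of "\<gamma> 1" \<rho>] root[of 1] first(1) Re_\<gamma>1 \<rho> True by simp
    then show ?thesis
      using \<gamma>k \<rho>(1) True by (simp add: field_simps)
  next
    case False
    with k have "4 \<le> k"
      by presburger
    moreover have "\<gamma> (k - 1) \<noteq> - of_real \<rho>"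
      using order_repeated_label_ge_2[OF roots k(2)] simple \<gamma>k by force
    ultimately have "(1 + 1 / real k ^ (k^2)) * \<rho> < cmod (\<gamma> (k - 1))"
      using Psi_root_norm_gt[OF k(1) _ \<rho> root] by simp
    then show ?thesis
      using \<gamma>k \<rho>(1) by (simp add: field_simps)
  qed
qed

end
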